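(* Let $(X,f)$ be a dynamical system and $\mathbf{a}=(a_1,\dots,a_r)\in\mathbb{N}^r$. The following are equivalent: (1) $(X,f)$ is $\mathbf{a}$-transitive; (2) $(X,f)$ is $\mathcal{F}[\mathbf{a}]$-transitive; (3) $(X,f)$ is transitive and $\mathcal{F}[\mathbf{a}]$-central.
   Context: A dynamical system is a pair $(X,f)$ with $X$ a compact metric space and $f:X\to X$ continuous. $\mathbb{N}=\{1,2,\dots\}$, $\mathbb{Z}_+=\{0,1,2,\dots\}$. $N(U,V)=\{n\in\mathbb{N}: U\cap f^{-n}(V)\neq\emptyset\}$. $(X,f)$ is transitive if $N(U,V)\neq\emptyset$ for all non-empty open $U,V$. For a family $\mathcal{F}$ of subsets of $\mathbb{N}$, $(X,f)$ is $\mathcal{F}$-transitive if $N(U,V)\in\mathcal{F}$ for all non-empty open $U,V$, and $\mathcal{F}$-central if $N(U,U)\in\mathcal{F}$ for all non-empty open $U$. For $\mathbf{a}\in\mathbb{N}^r$, $f^{(\mathbf{a})}=f^{a_1}\times\dots\times f^{a_r}:X^r\to X^r$, and $(X,f)$ is $\mathbf{a}$-transitive if $(X^r,f^{(\mathbf{a})})$ is transitive. $\mathcal{F}[\mathbf{a}]$ is the collection of all $F\subset\mathbb{N}$ such that for every $(n_1,\dots,n_r)\in\mathbb{Z}_+^r$ there exists $k\in\mathbb{N}$ with $ka_i+n_i\in F$ for all $i=1,\dots,r$. *)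

theory Defs
  imports "HOL-Analysis.Analysis"
begin

definition dyn_system :: "'a::metric_space set \<Rightarrow> ('a \<Rightarrow> 'a) \<Rightarrow> bool" where
  "dyn_system X f \<longleftrightarrow> compact X \<and> continuous_on X f \<and> f ` X \<subseteq> X"

definition hit_times :: "('b \<Rightarrow> 'b) \<Rightarrow> 'b set \<Rightarrow> 'b set \<Rightarrow> nat set" where
  "hit_times g U V = {n. n \<ge> 1 \<and> (\<exists>x\<in>U. (g ^^ n) x \<in> V)}"

definition F_transitive :: "nat set set \<Rightarrow> 'b topology \<Rightarrow> ('b \<Rightarrow> 'b) \<Rightarrow> bool" where
  "F_transitive \<F> T g \<longleftrightarrow>
     (\<forall>U V. openin T U \<and> openin T V \<and> U \<noteq> {} \<and> V \<noteq> {} \<longrightarrow> hit_times g U V \<in> \<F>)"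

definition F_central :: "nat set set \<Rightarrow> 'b topology \<Rightarrow> ('b \<Rightarrow> 'b) \<Rightarrow> bool" where
  "F_central \<F> T g \<longleftrightarrow>
     (\<forall>U. openin T U \<and> U \<noteq> {} \<longrightarrow> hit_times g U U \<in> \<F>)"

definition transitive_sys :: "'b topology \<Rightarrow> ('b \<Rightarrow> 'b) \<Rightarrow> bool" where
  "transitive_sys T g \<longleftrightarrow>
     (\<forall>U V. openin T U \<and> openin T V \<and> U \<noteq> {} \<and> V \<noteq> {} \<longrightarrow> hit_times g U V \<noteq> {})"

definition prod_top :: "'a set \<Rightarrow> nat \<Rightarrow> (nat \<Rightarrow> 'a::topological_space) topology" where
  "prod_top X r = product_topology (\<lambda>_. top_of_set X) {..<r}"

definition prod_map :: "('a \<Rightarrow> 'a) \<Rightarrow> nat \<Rightarrow> (nat \<Rightarrow> nat) \<Rightarrow> (nat \<Rightarrow> 'a) \<Rightarrow> (nat \<Rightarrow> 'a)" where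
  "prod_map f r a = (\<lambda>x. restrict (\<lambda>i. (f ^^ a i) (x i)) {..<r})"

definition a_transitive :: "'a::topological_space set \<Rightarrow> ('a \<Rightarrow> 'a) \<Rightarrow> nat \<Rightarrow> (nat \<Rightarrow> nat) \<Rightarrow> bool" where
  "a_transitive X f r a \<longleftrightarrow> transitive_sys (prod_top X r) (prod_map f r a)"

definition F_a :: "nat \<Rightarrow> (nat \<Rightarrow> nat) \<Rightarrow> nat set set" where
  "F_a r a = {F. \<forall>n::nat \<Rightarrow> nat. \<exists>k::nat. k \<ge> 1 \<and> (\<forall>i<r. k * a i + n i \<in> F)}"

end

theory Submission
  imports Defs
begin

text \<open>
  For boxes, \<open>m\<close> is a hitting time of the product map iff every \<open>m * a i\<close> is a hitting
  time of \<open>f\<close> between the \<open>i\<close>-th sides, so \<open>a\<close>-transitivity is a statement about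
  such simultaneous hitting times.  If it holds, \<open>f\<close> is onto (the open set \<open>X - f ` X\<close>
  is never hit), so the pullbacks of \<open>V\<close> under \<open>f ^^ n i\<close> are nonempty open sets; hitting
  them absorbs the shifts \<open>n i\<close>, which gives \<open>F_a\<close>-transitivity.  Conversely, transitivity
  yields one nonempty open \<open>W\<close> with \<open>(f ^^ c i) ` W \<subseteq> U i\<close> and
  \<open>(f ^^ d i) ` W \<subseteq> V i\<close>; centrality applied to \<open>N(W, W)\<close> with shifts
  \<open>L * a i + c i - d i\<close>, where \<open>L = (\<Sum>i<r. d i)\<close> keeps them nonnegative, gives \<open>k\<close> such that
  \<open>m = k + L\<close> is a simultaneous hitting time.
\<close>

lemma hit_times_mono:
  "U \<subseteq> U' \<Longrightarrow> V \<subseteq> V' \<Longrightarrow> hit_times g U V \<subseteq> hit_times g U' V'"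
  unfolding hit_times_def by blast

lemma F_a_memD:
  assumes "F \<in> F_a r a"
  obtains k where "k \<ge> 1" "\<forall>i<r. k * a i + n i \<in> F"
  using assms unfolding F_a_def by blast

lemma funpow_image_subset: "f ` X \<subseteq> X \<Longrightarrow> (f ^^ n) ` X \<subseteq> X"
  by (induction n) (auto simp: image_subset_iff)

lemma funpow_image_eq: "f ` X = X \<Longrightarrow> (f ^^ n) ` X = X"
  by (induction n) (simp_all add: image_image[of f "f ^^ _", symmetric])

lemma continuous_on_funpow:
  assumes "continuous_on X f" "f ` X \<subseteq> X"
  shows "continuous_on X (f ^^ n)"
proof (induction n)
  case (Suc n)
  then show ?case
    using assms funpow_image_subset[OF assms(2), of n]
    by (auto intro: continuous_on_compose2[of X f X "f ^^ n"])
qed (simp add: continuous_on_id)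

lemma openin_funpow_preimage:
  assumes "continuous_on X f" "f ` X \<subseteq> X" "openin (top_of_set X) V"
  shows "openin (top_of_set X) (X \<inter> (f ^^ n) -` V)"
  using continuous_on_funpow[OF assms(1,2)] funpow_image_subset[OF assms(2)] assms(3)
  by (intro continuous_openin_preimage[where T = X]) auto

lemma hit_times_funpow_preimage:
  "k \<in> hit_times f U (X \<inter> (f ^^ n) -` V) \<Longrightarrow> k + n \<in> hit_times f U V"
  unfolding hit_times_def by (auto simp: add.commute[of k n] funpow_add)

lemma hit_times_through:
  assumes "(f ^^ c) ` W \<subseteq> U" "(f ^^ d) ` W \<subseteq> V" "j \<in> hit_times f W W"
    and "p \<ge> 1" "p + c = d + j"
  shows "p \<in> hit_times f U V"
proof -
  obtain y where y: "y \<in> W" "(f ^^ j) y \<in> W"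
    using assms(3) unfolding hit_times_def by blast
  have "(f ^^ p) ((f ^^ c) y) = (f ^^ d) ((f ^^ j) y)"
    by (metis assms(5) funpow_add o_apply)
  then show ?thesis
    using assms(1,2,4) y unfolding hit_times_def by (auto intro!: bexI[of _ "(f ^^ c) y"])
qed

lemma hit_times_outside_image:
  assumes "f ` X \<subseteq> X"
  shows "hit_times f X (X - f ` X) = {}"
proof -
  have "(f ^^ n) x \<in> f ` X" if "x \<in> X" "n \<ge> 1" for n x
  proof -
    obtain p where "n = Suc p" using \<open>n \<ge> 1\<close> by (cases n) auto
    then show ?thesis using funpow_image_subset[OF assms, of p] that(1) by auto
  qed
  then show ?thesis
    unfolding hit_times_def by auto
qed

lemma funpow_prod_map:
  assumes "x \<in> extensional {..<r}"
  shows "(prod_map f r a ^^ m) x = restrict (\<lambda>i. (f ^^ (m * a i)) (x i)) {..<r}"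
proof (induction m)
  case 0
  then show ?case using assms by (auto simp: extensional_def restrict_def)
next
  case (Suc m)
  then show ?case by (auto simp: prod_map_def funpow_add)
qed

lemma hit_times_prod_map_PiE:
  assumes "\<forall>i<r. a i \<ge> 1"
  shows "hit_times (prod_map f r a) (PiE {..<r} U) (PiE {..<r} V)
       = {m. m \<ge> 1 \<and> (\<forall>i<r. m * a i \<in> hit_times f (U i) (V i))}"
proof (intro set_eqI iffI)
  fix m assume "m \<in> hit_times (prod_map f r a) (PiE {..<r} U) (PiE {..<r} V)"
  then obtain x where "m \<ge> 1" "x \<in> PiE {..<r} U" "(prod_map f r a ^^ m) x \<in> PiE {..<r} V"
    unfolding hit_times_def by blast
  then show "m \<in> {m. m \<ge> 1 \<and> (\<forall>i<r. m * a i \<in> hit_times f (U i) (V i))}"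
    using assms by (auto simp: funpow_prod_map hit_times_def PiE_iff)
next
  fix m assume "m \<in> {m. m \<ge> 1 \<and> (\<forall>i<r. m * a i \<in> hit_times f (U i) (V i))}"
  then have m: "m \<ge> 1" "\<forall>i\<in>{..<r}. \<exists>y. y \<in> U i \<and> (f ^^ (m * a i)) y \<in> V i"
    unfolding hit_times_def by auto
  obtain y where "\<forall>i\<in>{..<r}. y i \<in> U i \<and> (f ^^ (m * a i)) (y i) \<in> V i"
    using bchoice[OF m(2)] by blast
  then have "restrict y {..<r} \<in> PiE {..<r} U"
    "(prod_map f r a ^^ m) (restrict y {..<r}) \<in> PiE {..<r} V"
    by (simp_all add: funpow_prod_map PiE_iff)
  then show "m \<in> hit_times (prod_map f r a) (PiE {..<r} U) (PiE {..<r} V)"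
    using m(1) unfolding hit_times_def by blast
qed

lemma openin_prod_top_contains_box:
  assumes "openin (prod_top X r) S" "S \<noteq> {}"
  obtains B where "\<forall>i<r. openin (top_of_set X) (B i) \<and> B i \<noteq> {}" "PiE {..<r} B \<subseteq> S"
proof -
  obtain z where "z \<in> S"
    using assms(2) by blast
  then obtain B where "\<forall>i\<in>{..<r}. openin (top_of_set X) (B i)" "z \<in> PiE {..<r} B"
    "PiE {..<r} B \<subseteq> S"
    using assms(1) unfolding prod_top_def openin_product_topology_alt by meson
  moreover have "\<forall>i<r. B i \<noteq> {}"
    using \<open>z \<in> PiE {..<r} B\<close> by (auto simp: PiE_iff)
  ultimately show ?thesis
    by (intro that[of B]) auto
qed

lemma a_transitive_iff_boxes:
  assumes "\<forall>i<r. a i \<ge> 1"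
  shows "a_transitive X f r a \<longleftrightarrow>
    (\<forall>U V. (\<forall>i<r. openin (top_of_set X) (U i) \<and> U i \<noteq> {} \<and>
                  openin (top_of_set X) (V i) \<and> V i \<noteq> {})
       \<longrightarrow> (\<exists>m\<ge>1. \<forall>i<r. m * a i \<in> hit_times f (U i) (V i)))"
    (is "_ \<longleftrightarrow> (\<forall>U V. ?box U V \<longrightarrow> ?hit U V)")
proof
  assume at: "a_transitive X f r a"
  show "\<forall>U V. ?box U V \<longrightarrow> ?hit U V"
  proof (intro allI impI)
    fix U V assume "?box U V"
    then have "openin (prod_top X r) (PiE {..<r} U)" "openin (prod_top X r) (PiE {..<r} V)"
      "PiE {..<r} U \<noteq> {}" "PiE {..<r} V \<noteq> {}"
      by (auto simp: prod_top_def openin_PiE_gen PiE_eq_empty_iff)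
    then have "hit_times (prod_map f r a) (PiE {..<r} U) (PiE {..<r} V) \<noteq> {}"
      using at unfolding a_transitive_def transitive_sys_def by simp
    then show "?hit U V"
      unfolding hit_times_prod_map_PiE[OF assms] by auto
  qed
next
  assume boxes: "\<forall>U V. ?box U V \<longrightarrow> ?hit U V"
  show "a_transitive X f r a"
    unfolding a_transitive_def transitive_sys_def
  proof (intro allI impI)
    fix S T assume ST: "openin (prod_top X r) S \<and> openin (prod_top X r) T \<and> S \<noteq> {} \<and> T \<noteq> {}"
    obtain U where U: "\<forall>i<r. openin (top_of_set X) (U i) \<and> U i \<noteq> {}" "PiE {..<r} U \<subseteq> S"
      using ST openin_prod_top_contains_box by metis
    obtain V where V: "\<forall>i<r. openin (top_of_set X) (V i) \<and> V i \<noteq> {}" "PiE {..<r} V \<subseteq> T"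
      using ST openin_prod_top_contains_box by metis
    have "?hit U V"
      using boxes U(1) V(1) by simp
    then have "hit_times (prod_map f r a) (PiE {..<r} U) (PiE {..<r} V) \<noteq> {}"
      unfolding hit_times_prod_map_PiE[OF assms] by auto
    then show "hit_times (prod_map f r a) S T \<noteq> {}"
      using hit_times_mono[OF U(2) V(2)] by blast
  qed
qed

lemma a_transitive_hit_boxes:
  assumes "\<forall>i<r. a i \<ge> 1" "a_transitive X f r a"
    and "\<forall>i<r. openin (top_of_set X) (U i) \<and> U i \<noteq> {} \<and>
                openin (top_of_set X) (V i) \<and> V i \<noteq> {}"
  shows "\<exists>m\<ge>1. \<forall>i<r. m * a i \<in> hit_times f (U i) (V i)"
  using assms a_transitive_iff_boxes by blast

lemma a_transitive_imp_surj:
  assumes "dyn_system X f" "r \<ge> 1" "\<forall>i<r. a i \<ge> 1" "a_transitive X f r a"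
  shows "f ` X = X"
proof (rule ccontr)
  assume "f ` X \<noteq> X"
  have sub: "f ` X \<subseteq> X" and "compact X" "continuous_on X f"
    using assms(1) unfolding dyn_system_def by auto
  then have "closed (f ` X)"
    by (simp add: compact_continuous_image compact_imp_closed)
  then have "openin (top_of_set X) (X - f ` X)"
    by (metis Diff_eq open_Compl openin_open_Int)
  moreover have "X - f ` X \<noteq> {}" "X \<noteq> {}"
    using \<open>f ` X \<noteq> X\<close> sub by auto
  ultimately obtain m where "\<forall>i<r. m * a i \<in> hit_times f X (X - f ` X)"
    using a_transitive_hit_boxes[OF assms(3,4), of "\<lambda>_. X" "\<lambda>_. X - f ` X"] by auto
  then show False
    using hit_times_outside_image[OF sub] assms(2) by auto
qed

lemma a_transitive_imp_F_transitive:
  assumes ds: "dyn_system X f" and "r \<ge> 1" and a: "\<forall>i<r. a i \<ge> 1"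
    and at: "a_transitive X f r a"
  shows "F_transitive (F_a r a) (top_of_set X) f"
  unfolding F_transitive_def F_a_def
proof (intro allI impI CollectI)
  fix U V and n :: "nat \<Rightarrow> nat"
  assume UV: "openin (top_of_set X) U \<and> openin (top_of_set X) V \<and> U \<noteq> {} \<and> V \<noteq> {}"
  have sub: "f ` X \<subseteq> X" and ct: "continuous_on X f"
    using ds unfolding dyn_system_def by auto
  define P where "P i = X \<inter> (f ^^ n i) -` V" for i
  have "P i \<noteq> {}" for i
  proof -
    have "V \<subseteq> (f ^^ n i) ` X"
      using funpow_image_eq[OF a_transitive_imp_surj[OF assms]] UV openin_imp_subset by metis
    then show ?thesis using UV unfolding P_def by blast
  qed
  moreover have "openin (top_of_set X) (P i)" for i
    unfolding P_def using openin_funpow_preimage[OF ct sub] UV by blast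
  ultimately obtain m where "m \<ge> 1" "\<forall>i<r. m * a i \<in> hit_times f U (P i)"
    using a_transitive_hit_boxes[OF a at, of "\<lambda>_. U" P] UV by auto
  then show "\<exists>k\<ge>1. \<forall>i<r. k * a i + n i \<in> hit_times f U V"
    unfolding P_def by (blast intro: hit_times_funpow_preimage)
qed

lemma F_transitive_imp_transitive_central:
  assumes "r \<ge> 1" "F_transitive (F_a r a) (top_of_set X) f"
  shows "transitive_sys (top_of_set X) f \<and> F_central (F_a r a) (top_of_set X) f"
proof
  show "F_central (F_a r a) (top_of_set X) f"
    using assms(2) unfolding F_transitive_def F_central_def by simp
  show "transitive_sys (top_of_set X) f"
    unfolding transitive_sys_def
  proof (intro allI impI)
    fix U V assume "openin (top_of_set X) U \<and> openin (top_of_set X) V \<and> U \<noteq> {} \<and> V \<noteq> {}"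
    then have "hit_times f U V \<in> F_a r a"
      using assms(2) unfolding F_transitive_def by blast
    then obtain k where "\<forall>i<r. k * a i + 0 \<in> hit_times f U V"
      by (rule F_a_memD)
    then show "hit_times f U V \<noteq> {}"
      using assms(1) by auto
  qed
qed

lemma transitive_common_entrance:
  assumes tr: "transitive_sys (top_of_set X) f" and ct: "continuous_on X f" and sub: "f ` X \<subseteq> X"
    and "finite I" "openin (top_of_set X) W\<^sub>0" "W\<^sub>0 \<noteq> {}"
    and "\<forall>j\<in>I. openin (top_of_set X) (T j) \<and> T j \<noteq> {}"
  shows "\<exists>W e. openin (top_of_set X) W \<and> W \<noteq> {} \<and> W \<subseteq> W\<^sub>0 \<and> (\<forall>j\<in>I. (f ^^ e j) ` W \<subseteq> T j)"
  using assms(4,7)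
proof (induction I rule: finite_induct)
  case empty
  then show ?case using assms(5,6) by blast
next
  case (insert j I)
  then obtain W e where W: "openin (top_of_set X) W" "W \<noteq> {}" "W \<subseteq> W\<^sub>0"
    "\<forall>j\<in>I. (f ^^ e j) ` W \<subseteq> T j"
    by auto
  have Tj: "openin (top_of_set X) (T j)" "T j \<noteq> {}"
    using insert.prems by auto
  then obtain n x where "x \<in> W" "(f ^^ n) x \<in> T j"
    using tr W(1,2) unfolding transitive_sys_def hit_times_def by blast
  moreover have "openin (top_of_set X) (W \<inter> (X \<inter> (f ^^ n) -` T j))"
    using W(1) openin_funpow_preimage[OF ct sub Tj(1)] by blast
  moreover have "W \<subseteq> X"
    using W(1) openin_imp_subset by blast
  moreover have "\<forall>i\<in>insert j I. (f ^^ (e(j := n)) i) ` (W \<inter> (X \<inter> (f ^^ n) -` T j)) \<subseteq> T i"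
    using W(4) \<open>j \<notin> I\<close> by fastforce
  ultimately show ?case
    using W(3) by (intro exI[of _ "W \<inter> (X \<inter> (f ^^ n) -` T j)"] exI[of _ "e(j := n)"]) auto
qed

lemma transitive_central_imp_a_transitive:
  assumes ct: "continuous_on X f" and sub: "f ` X \<subseteq> X" and a: "\<forall>i<r. a i \<ge> 1"
    and tr: "transitive_sys (top_of_set X) f" and fc: "F_central (F_a r a) (top_of_set X) f"
  shows "a_transitive X f r a"
  unfolding a_transitive_iff_boxes[OF a]
proof (intro allI impI)
  fix U V
  assume box: "\<forall>i<r. openin (top_of_set X) (U i) \<and> U i \<noteq> {} \<and>
                     openin (top_of_set X) (V i) \<and> V i \<noteq> {}"
  show "\<exists>m\<ge>1. \<forall>i<r. m * a i \<in> hit_times f (U i) (V i)"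
  proof (cases "r = 0")
    case False
    then have "X \<noteq> {}"
      using box openin_subset by fastforce
    then obtain W\<^sub>1 c where W\<^sub>1: "openin (top_of_set X) W\<^sub>1" "W\<^sub>1 \<noteq> {}"
      "\<forall>i\<in>{..<r}. (f ^^ c i) ` W\<^sub>1 \<subseteq> U i"
      using transitive_common_entrance[OF tr ct sub, of "{..<r}" X U] box by auto
    then obtain W d where W: "openin (top_of_set X) W" "W \<noteq> {}" "W \<subseteq> W\<^sub>1"
      "\<forall>i\<in>{..<r}. (f ^^ d i) ` W \<subseteq> V i"
      using transitive_common_entrance[OF tr ct sub, of "{..<r}" W\<^sub>1 V] box by auto
    define L where "L = (\<Sum>i<r. d i)"
    have "hit_times f W W \<in> F_a r a"
      using fc W(1,2) unfolding F_central_def by blast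
    then obtain k where k: "k \<ge> 1" "\<forall>i<r. k * a i + (L * a i + c i - d i) \<in> hit_times f W W"
      by (rule F_a_memD)
    have "(k + L) * a i \<in> hit_times f (U i) (V i)" if i: "i < r" for i
    proof (rule hit_times_through[where j = "k * a i + (L * a i + c i - d i)"])
      show "k * a i + (L * a i + c i - d i) \<in> hit_times f W W"
        using k(2) i by blast
      show "(k + L) * a i \<ge> 1"
        using k(1) a i by simp
      show "(f ^^ c i) ` W \<subseteq> U i" "(f ^^ d i) ` W \<subseteq> V i"
        using W(3,4) W\<^sub>1(3) i by fastforce+
      have "d i \<le> L"
        unfolding L_def using i by (intro member_le_sum) auto
      also have "L \<le> L * a i"
        using a i by simp
      finally show "(k + L) * a i + c i = d i + (k * a i + (L * a i + c i - d i))"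
        by (simp add: algebra_simps)
    qed
    then show ?thesis
      using k(1) by (intro exI[of _ "k + L"]) simp
  qed auto
qed

theorem theorem4p6:
  fixes X :: "'a::metric_space set" and f :: "'a \<Rightarrow> 'a"
    and r :: nat and a :: "nat \<Rightarrow> nat"
  assumes "dyn_system X f"
    and "r \<ge> 1"
    and "\<forall>i<r. a i \<ge> 1"
  shows "(a_transitive X f r a \<longleftrightarrow> F_transitive (F_a r a) (top_of_set X) f)
       \<and> (F_transitive (F_a r a) (top_of_set X) f \<longleftrightarrow>
            transitive_sys (top_of_set X) f \<and> F_central (F_a r a) (top_of_set X) f)"
proof -
  have "continuous_on X f" "f ` X \<subseteq> X"
    using assms(1) unfolding dyn_system_def by auto
  then show ?thesis
    using a_transitive_imp_F_transitive[OF assms]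
      F_transitive_imp_transitive_central[OF assms(2)]
      transitive_central_imp_a_transitive[of X f r a] assms(3)
    by blast
qed

end
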